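(* Let $x,z\in X^\infty$. Then $(F_x,\phi_x)\cong(F_z,\phi_z)$ as extended representation graphs if and only if $x\sim_\infty z$.
   Context: $E=(E^0,E^1,s,r)$ is a row-finite directed graph; for each vertex $v$ emitting an edge a fixed edge $e^v\in s^{-1}(v)$ is called special, others nonspecial. The double graph $E_d$ has vertices $E^0$ and edges $e$ (real) and $e^*$ (ghost) for $e\in E^1$, with $s_d(e)=s(e),r_d(e)=r(e),s_d(e^* )=r(e),r_d(e^* )=s(e)$. For a path $p=e_1\dots e_n$ set $p^*=e_n^*\dots e_1^*$. The set $X$ of (finite) basis paths consists of the paths in $E_d$: vertices; $p,p^*$ for paths $p$ of length $\ge1$ in $E$; $pq^*$ with $p=e_1\dots e_k,q=f_1\dots f_n$ of length $\ge1$ in $E$, $r(p)=r(q)$, and $e_k\ne f_n$ or $e_k=f_n$ nonspecial. $X^\infty$ is the set of left-infinite words $x=\dots x_3x_2x_1$ of edges of $E_d$ such that each $x_n\dots x_1$ is a basis path; $x\sim_\infty z$ iff there are $m,n\ge0$ with $\dots x_{m+2}x_{m+1}=\dots z_{n+2}z_{n+1}$. An extended representation graph for $E$ is a pair $(F,\phi)$, $F$ a directed graph, $\phi:F\to E_d$ a graph homomorphism, such that for every $w\in F^0$: (i) $w$ is a source or receives exactly one edge $f_w$; (ii) if $w$ is a source or $\phi(f_w)$ is a nonspecial real edge, $\phi$ maps $s^{-1}(w)$ bijectively onto $s_d^{-1}(\phi(w))$; (iii) if $\phi(f_w)$ is a special real edge, onto $s_d^{-1}(\phi(w))\setminus\{\phi(f_w)^*\}$;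 (iv) if $\phi(f_w)$ is a ghost edge, onto the ghost edges in $s_d^{-1}(\phi(w))$. An isomorphism $(F,\phi)\to(G,\psi)$ is a graph isomorphism $\alpha$ with $\psi\circ\alpha=\phi$. $(F_x,\phi_x)$ for $x=\dots x_2x_1\in X^\infty$: for $i\in\mathbb N$, $X_i$ = basis paths $y=y_1\dots y_n$, $n\ge1$, with $x_iy_1$ a basis path and $y_1\ne x_{i-1}$ if $i\ge2$. Vertices $w_i$ ($i\in\mathbb N$), $w_{i,y}$ ($y\in X_i$), all distinct; edges $f_i$ from $w_{i+1}$ to $w_i$, and $f_{i,y}$ to $w_{i,y}$ from $w_i$ if $|y|=1$, from $w_{i,y_1\dots y_{n-1}}$ if $n\ge2$; $\phi_x(w_i)=r_d(x_i)$, $\phi_x(w_{i,y})=r_d(y)$, $\phi_x(f_i)=x_i$, $\phi_x(f_{i,y})=$ last edge of $y$. *)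

theory Defs
  imports Main
begin

text \<open>The choice of special edges is a function sp :: 'v => 'e; for a vertex v emitting
  an edge, sp v is the special edge e^v.  An edge e is nonspecial iff e ~= sp (s e).\<close>

definition graph_wf :: "'v set \<Rightarrow> 'e set \<Rightarrow> ('e \<Rightarrow> 'v) \<Rightarrow> ('e \<Rightarrow> 'v) \<Rightarrow> bool" where
  "graph_wf E0 E1 s r \<longleftrightarrow> (\<forall>e\<in>E1. s e \<in> E0 \<and> r e \<in> E0)"

definition row_finite :: "'v set \<Rightarrow> 'e set \<Rightarrow> ('e \<Rightarrow> 'v) \<Rightarrow> bool" where
  "row_finite E0 E1 s \<longleftrightarrow> (\<forall>v\<in>E0. finite {e\<in>E1. s e = v})"

definition special_choice :: "'v set \<Rightarrow> 'e set \<Rightarrow> ('e \<Rightarrow> 'v) \<Rightarrow> ('v \<Rightarrow> 'e) \<Rightarrow> bool" where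
  "special_choice E0 E1 s sp \<longleftrightarrow>
     (\<forall>v\<in>E0. (\<exists>e\<in>E1. s e = v) \<longrightarrow> sp v \<in> E1 \<and> s (sp v) = v)"

text \<open>Edges of the double graph E_d: real edges e and ghost edges e^*.\<close>
datatype 'e dedge = Re 'e | Gh 'e

fun und :: "'e dedge \<Rightarrow> 'e" where
  "und (Re e) = e" | "und (Gh e) = e"

fun is_real :: "'e dedge \<Rightarrow> bool" where
  "is_real (Re e) = True" | "is_real (Gh e) = False"

fun sd :: "('e \<Rightarrow> 'v) \<Rightarrow> ('e \<Rightarrow> 'v) \<Rightarrow> 'e dedge \<Rightarrow> 'v" where
  "sd s r (Re e) = s e" | "sd s r (Gh e) = r e"

fun rd :: "('e \<Rightarrow> 'v) \<Rightarrow> ('e \<Rightarrow> 'v) \<Rightarrow> 'e dedge \<Rightarrow> 'v" where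
  "rd s r (Re e) = r e" | "rd s r (Gh e) = s e"

text \<open>Nonempty paths in E_d, written left to right: ys!0 is traversed first.\<close>
definition dpath :: "'e set \<Rightarrow> ('e \<Rightarrow> 'v) \<Rightarrow> ('e \<Rightarrow> 'v) \<Rightarrow> 'e dedge list \<Rightarrow> bool" where
  "dpath E1 s r ys \<longleftrightarrow> ys \<noteq> [] \<and> (\<forall>y\<in>set ys. und y \<in> E1) \<and>
     (\<forall>i. Suc i < length ys \<longrightarrow> rd s r (ys ! i) = sd s r (ys ! Suc i))"

text \<open>Basis paths of length >= 1: p, p^*, or p q^* with the condition on the junction
  (last edge e_k of p, last edge f_n of q: e_k ~= f_n, or e_k = f_n nonspecial).\<close>
definition basis_path :: "'e set \<Rightarrow> ('e \<Rightarrow> 'v) \<Rightarrow> ('e \<Rightarrow> 'v) \<Rightarrow> ('v \<Rightarrow> 'e) \<Rightarrow> 'e dedge list \<Rightarrow> bool" where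
  "basis_path E1 s r sp ys \<longleftrightarrow> dpath E1 s r ys \<and>
     (\<exists>a b. ys = a @ b \<and> (\<forall>y\<in>set a. is_real y) \<and> (\<forall>y\<in>set b. \<not> is_real y) \<and>
        (a \<noteq> [] \<longrightarrow> b \<noteq> [] \<longrightarrow> und (last a) \<noteq> und (hd b) \<or> und (last a) \<noteq> sp (s (und (last a)))))"

text \<open>Left-infinite words x = ... x_3 x_2 x_1 are stored as x :: nat => 'e dedge with
  x_i = x (i - 1), i.e. x 0 = x_1.  The finite word x_n ... x_1 is rev (map x [0..<n]).\<close>
definition Xinf :: "'e set \<Rightarrow> ('e \<Rightarrow> 'v) \<Rightarrow> ('e \<Rightarrow> 'v) \<Rightarrow> ('v \<Rightarrow> 'e) \<Rightarrow> (nat \<Rightarrow> 'e dedge) set" where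
  "Xinf E1 s r sp = {x. \<forall>n\<ge>1. basis_path E1 s r sp (rev (map x [0..<n]))}"

definition tail_equiv :: "(nat \<Rightarrow> 'e dedge) \<Rightarrow> (nat \<Rightarrow> 'e dedge) \<Rightarrow> bool" where
  "tail_equiv x z \<longleftrightarrow> (\<exists>m n. \<forall>k. x (m + k) = z (n + k))"

record ('w, 'f, 'v, 'e) lgraph =
  LV :: "'w set"
  LE :: "'f set"
  Ls :: "'f \<Rightarrow> 'w"
  Lr :: "'f \<Rightarrow> 'w"
  phiV :: "'w \<Rightarrow> 'v"
  phiE :: "'f \<Rightarrow> 'e dedge"

definition lgraph_iso :: "('w, 'f, 'v, 'e) lgraph \<Rightarrow> ('w2, 'f2, 'v, 'e) lgraph \<Rightarrow> bool" where
  "lgraph_iso F G \<longleftrightarrow> (\<exists>a b. bij_betw a (LV F) (LV G) \<and> bij_betw b (LE F) (LE G) \<and>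
     (\<forall>f\<in>LE F. Ls G (b f) = a (Ls F f) \<and> Lr G (b f) = a (Lr F f) \<and> phiE G (b f) = phiE F f) \<and>
     (\<forall>w\<in>LV F. phiV G (a w) = phiV F w))"

text \<open>The graph (F_x, phi_x).  Indices i range over {1,2,...}; x_i = x (i - 1).
  W i = w_i, WY i y = w_{i,y}; FE i = f_i, FY i y = f_{i,y}.\<close>
datatype 'e fvert = W nat | WY nat "'e dedge list"
datatype 'e fedge = FE nat | FY nat "'e dedge list"

definition Xi :: "'e set \<Rightarrow> ('e \<Rightarrow> 'v) \<Rightarrow> ('e \<Rightarrow> 'v) \<Rightarrow> ('v \<Rightarrow> 'e) \<Rightarrow> (nat \<Rightarrow> 'e dedge) \<Rightarrow> nat \<Rightarrow> 'e dedge list set" where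
  "Xi E1 s r sp x i = {y. basis_path E1 s r sp y \<and> basis_path E1 s r sp [x (i - 1), hd y] \<and>
                          (i \<ge> 2 \<longrightarrow> hd y \<noteq> x (i - 2))}"

definition Fx :: "'e set \<Rightarrow> ('e \<Rightarrow> 'v) \<Rightarrow> ('e \<Rightarrow> 'v) \<Rightarrow> ('v \<Rightarrow> 'e) \<Rightarrow> (nat \<Rightarrow> 'e dedge)
     \<Rightarrow> ('e fvert, 'e fedge, 'v, 'e) lgraph" where
  "Fx E1 s r sp x =
    \<lparr> LV = {W i | i. i \<ge> 1} \<union> {WY i y | i y. i \<ge> 1 \<and> y \<in> Xi E1 s r sp x i},
      LE = {FE i | i. i \<ge> 1} \<union> {FY i y | i y. i \<ge> 1 \<and> y \<in> Xi E1 s r sp x i},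
      Ls = (\<lambda>f. case f of FE i \<Rightarrow> W (Suc i)
                  | FY i y \<Rightarrow> (if length y = 1 then W i else WY i (butlast y))),
      Lr = (\<lambda>f. case f of FE i \<Rightarrow> W i | FY i y \<Rightarrow> WY i y),
      phiV = (\<lambda>w. case w of W i \<Rightarrow> rd s r (x (i - 1)) | WY i y \<Rightarrow> rd s r (last y)),
      phiE = (\<lambda>f. case f of FE i \<Rightarrow> x (i - 1) | FY i y \<Rightarrow> last y) \<rparr>"

end

theory Submission
  imports Defs
begin

text \<open>Every vertex of \<open>F\<^sub>x\<close> receives exactly one edge, so an isomorphism
  \<open>F\<^sub>x \<cong> F\<^sub>z\<close> amounts to a bijection of vertices that commutes with the parent map
  (source of the incoming edge) and preserves labels (image of the incoming edge).
  Deleting the first letter of \<open>x\<close> yields such a bijection onto the graph of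
  \<open>\<dots>x\<^sub>3x\<^sub>2\<close>: the spine vertex \<open>w\<^sub>1\<close> becomes the branch vertex
  \<open>w\<^sub>1\<^sub>,\<^sub>x\<^sub>1\<close>, and the branches at \<open>w\<^sub>1\<close> and \<open>w\<^sub>2\<close> merge into the
  branches at the new \<open>w\<^sub>1\<close>; hence tail-equivalent words give isomorphic graphs.
  Conversely, following parents from any vertex eventually reaches the spine
  \<open>w\<^sub>1, w\<^sub>2, \<dots>\<close>, so an isomorphism maps some \<open>w\<^sub>i\<close> to some \<open>w\<^sub>j\<close>, hence
  \<open>w\<^sub>i\<^sub>+\<^sub>k\<close> to \<open>w\<^sub>j\<^sub>+\<^sub>k\<close> for all \<open>k\<close>, and comparing labels gives
  \<open>x\<^sub>i\<^sub>+\<^sub>k = z\<^sub>j\<^sub>+\<^sub>k\<close>.\<close>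

lemma lgraph_iso_refl: "lgraph_iso F F"
  unfolding lgraph_iso_def by (intro exI[of _ id]) auto

lemma lgraph_iso_trans:
  assumes "lgraph_iso F G" "lgraph_iso G H"
  shows "lgraph_iso F H"
proof -
  obtain a b where ab: "bij_betw a (LV F) (LV G)" "bij_betw b (LE F) (LE G)"
    "\<forall>f\<in>LE F. Ls G (b f) = a (Ls F f) \<and> Lr G (b f) = a (Lr F f) \<and> phiE G (b f) = phiE F f"
    "\<forall>w\<in>LV F. phiV G (a w) = phiV F w"
    using assms(1) unfolding lgraph_iso_def by blast
  obtain c d where cd: "bij_betw c (LV G) (LV H)" "bij_betw d (LE G) (LE H)"
    "\<forall>f\<in>LE G. Ls H (d f) = c (Ls G f) \<and> Lr H (d f) = c (Lr G f) \<and> phiE H (d f) = phiE G f"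
    "\<forall>w\<in>LV G. phiV H (c w) = phiV G w"
    using assms(2) unfolding lgraph_iso_def by blast
  have "bij_betw (c \<circ> a) (LV F) (LV H)" "bij_betw (d \<circ> b) (LE F) (LE H)"
    using ab cd bij_betw_trans by blast+
  moreover have "\<forall>f\<in>LE F. Ls H ((d \<circ> b) f) = (c \<circ> a) (Ls F f) \<and>
      Lr H ((d \<circ> b) f) = (c \<circ> a) (Lr F f) \<and> phiE H ((d \<circ> b) f) = phiE F f"
    using ab(2,3) cd(3) by (simp add: bij_betw_apply)
  moreover have "\<forall>w\<in>LV F. phiV H ((c \<circ> a) w) = phiV F w"
    using ab(1,4) cd(4) by (simp add: bij_betw_apply)
  ultimately show ?thesis
    unfolding lgraph_iso_def by blast
qed

lemma lgraph_iso_sym: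
  assumes "lgraph_iso F G"
    and endpoints: "\<And>f. f \<in> LE F \<Longrightarrow> Ls F f \<in> LV F \<and> Lr F f \<in> LV F"
  shows "lgraph_iso G F"
proof -
  obtain a b where ab: "bij_betw a (LV F) (LV G)" "bij_betw b (LE F) (LE G)"
    "\<forall>f\<in>LE F. Ls G (b f) = a (Ls F f) \<and> Lr G (b f) = a (Lr F f) \<and> phiE G (b f) = phiE F f"
    "\<forall>w\<in>LV F. phiV G (a w) = phiV F w"
    using assms(1) unfolding lgraph_iso_def by blast
  define a' where "a' = inv_into (LV F) a"
  define b' where "b' = inv_into (LE F) b"
  have a': "bij_betw a' (LV G) (LV F)" "\<And>w. w \<in> LV F \<Longrightarrow> a' (a w) = w"
    "\<And>w. w \<in> LV G \<Longrightarrow> a (a' w) = w"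
    unfolding a'_def
    by (fact bij_betw_inv_into[OF ab(1)] bij_betw_inv_into_left[OF ab(1)] bij_betw_inv_into_right[OF ab(1)])+
  have b': "bij_betw b' (LE G) (LE F)" "\<And>f. f \<in> LE G \<Longrightarrow> b (b' f) = f"
    unfolding b'_def by (fact bij_betw_inv_into[OF ab(2)] bij_betw_inv_into_right[OF ab(2)])+
  have "\<forall>f\<in>LE G. Ls F (b' f) = a' (Ls G f) \<and> Lr F (b' f) = a' (Lr G f) \<and> phiE F (b' f) = phiE G f"
  proof
    fix f
    assume "f \<in> LE G"
    then have f': "b' f \<in> LE F" and bb': "b (b' f) = f"
      using b' by (simp_all add: bij_betw_apply)
    have "Ls G f = a (Ls F (b' f))" "Lr G f = a (Lr F (b' f))" "phiE G f = phiE F (b' f)"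
      using ab(3)[rule_format, OF f'] by (simp_all add: bb')
    then show "Ls F (b' f) = a' (Ls G f) \<and> Lr F (b' f) = a' (Lr G f) \<and> phiE F (b' f) = phiE G f"
      using a'(2) endpoints[OF f'] by simp
  qed
  moreover have "\<forall>w\<in>LV G. phiV F (a' w) = phiV G w"
  proof
    fix w
    assume "w \<in> LV G"
    then have "a' w \<in> LV F" "a (a' w) = w"
      using a'(1,3) by (simp_all add: bij_betw_apply)
    then show "phiV F (a' w) = phiV G w"
      using ab(4) by force
  qed
  ultimately show ?thesis
    using a'(1) b'(1) unfolding lgraph_iso_def by blast
qed

definition basis_junction :: "('e \<Rightarrow> 'v) \<Rightarrow> ('v \<Rightarrow> 'e) \<Rightarrow> 'e dedge \<Rightarrow> 'e dedge \<Rightarrow> bool" where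
  "basis_junction s sp u v \<longleftrightarrow> (is_real v \<longrightarrow> is_real u) \<and>
     (is_real u \<and> \<not> is_real v \<longrightarrow> und u \<noteq> und v \<or> und u \<noteq> sp (s (und u)))"

lemma real_ghost_split_iff_successively:
  "(\<exists>a b. ys = a @ b \<and> (\<forall>y\<in>set a. is_real y) \<and> (\<forall>y\<in>set b. \<not> is_real y) \<and>
      (a \<noteq> [] \<longrightarrow> b \<noteq> [] \<longrightarrow> und (last a) \<noteq> und (hd b) \<or> und (last a) \<noteq> sp (s (und (last a)))))
   \<longleftrightarrow> successively (basis_junction s sp) ys"
  (is "(\<exists>a b. ?split ys a b) \<longleftrightarrow> _")
proof
  assume "\<exists>a b. ?split ys a b"
  then obtain a b where "?split ys a b" by blast
  then show "successively (basis_junction s sp) ys"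
    by (auto simp: successively_append_iff basis_junction_def
        intro: successively_if_sorted_wrt sorted_wrt_iff_nth_less[THEN iffD2])
next
  assume "successively (basis_junction s sp) ys"
  then show "\<exists>a b. ?split ys a b"
  proof (induction ys)
    case Nil
    show ?case by auto
  next
    case (Cons y ys)
    then obtain a b where ab: "?split ys a b"
      by (auto simp: successively_Cons)
    show ?case
    proof (cases "is_real y")
      case True
      then have "?split (y # ys) (y # a) b"
        using ab Cons.prems by (cases a) (auto simp: successively_Cons basis_junction_def)
      then show ?thesis by blast
    next
      case False
      then have "a = []"
        using ab Cons.prems by (cases a) (auto simp: successively_Cons basis_junction_def)
      then have "?split (y # ys) [] (y # b)"
        using ab False by auto
      then show ?thesis by blast
    qed
  qed
qed

lemma basis_path_iff_successively:
  "basis_path E1 s r sp ys \<longleftrightarrow> ys \<noteq> [] \<and> (\<forall>y\<in>set ys. und y \<in> E1) \<and>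
     successively (\<lambda>u v. rd s r u = sd s r v \<and> basis_junction s sp u v) ys"
  unfolding basis_path_def dpath_def real_ghost_split_iff_successively successively_conv_nth
  by blast

lemma basis_path_append_iff:
  assumes "u \<noteq> []" "v \<noteq> []"
  shows "basis_path E1 s r sp (u @ v) \<longleftrightarrow>
    basis_path E1 s r sp u \<and> basis_path E1 s r sp v \<and> basis_path E1 s r sp [last u, hd v]"
  using assms by (auto simp: basis_path_iff_successively successively_append_iff)

lemma XinfD:
  assumes "x \<in> Xinf E1 s r sp" "n \<ge> 1"
  shows "basis_path E1 s r sp (rev (map x [0..<n]))"
  using assms unfolding Xinf_def by blast

lemma Xinf_shift:
  assumes "x \<in> Xinf E1 s r sp"
  shows "(\<lambda>k. x (m + k)) \<in> Xinf E1 s r sp"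
  unfolding Xinf_def
proof (intro CollectI allI impI)
  fix n :: nat
  assume "n \<ge> 1"
  have "rev (map x [0..<m + n]) = rev (map (\<lambda>k. x (m + k)) [0..<n]) @ rev (map x [0..<m])"
    by (induction n) auto
  moreover have "basis_path E1 s r sp (rev (map x [0..<m + n]))"
    using XinfD[OF assms] \<open>n \<ge> 1\<close> by simp
  ultimately show "basis_path E1 s r sp (rev (map (\<lambda>k. x (m + k)) [0..<n]))"
    using \<open>n \<ge> 1\<close> basis_path_append_iff[of "rev (map (\<lambda>k. x (m + k)) [0..<n])" "rev (map x [0..<m])"]
    by (cases m) auto
qed

lemma Xi_nonempty: "y \<in> Xi E1 s r sp x i \<Longrightarrow> y \<noteq> []"
  unfolding Xi_def basis_path_iff_successively by blast

lemma butlast_in_Xi: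
  assumes "y \<in> Xi E1 s r sp x i" "length y \<noteq> 1"
  shows "butlast y \<in> Xi E1 s r sp x i"
proof -
  obtain u t where y: "y = u @ [t]"
    using Xi_nonempty[OF assms(1)] by (metis rev_exhaust)
  with assms(2) have "u \<noteq> []" by auto
  with y show ?thesis
    using assms(1) basis_path_append_iff[of u "[t]"] by (auto simp: Xi_def)
qed

section \<open>The graphs \<open>F\<^sub>x\<close> as trees with labelled parent maps\<close>

text \<open>Every vertex \<open>w\<close> of \<open>F\<^sub>x\<close> receives exactly one edge, \<open>in_edge w\<close>;
  \<open>parent w\<close> is its source and \<open>label x w\<close> its image under \<open>\<phi>\<^sub>x\<close>.\<close>

fun parent :: "'e fvert \<Rightarrow> 'e fvert" where
  "parent (W i) = W (Suc i)"
| "parent (WY i y) = (if length y = 1 then W i else WY i (butlast y))"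

fun label :: "(nat \<Rightarrow> 'e dedge) \<Rightarrow> 'e fvert \<Rightarrow> 'e dedge" where
  "label x (W i) = x (i - 1)"
| "label x (WY i y) = last y"

fun in_edge :: "'e fvert \<Rightarrow> 'e fedge" where
  "in_edge (W i) = FE i"
| "in_edge (WY i y) = FY i y"

lemma Fx_simps [simp]:
  "W i \<in> LV (Fx E1 s r sp x) \<longleftrightarrow> i \<ge> 1"
  "WY i y \<in> LV (Fx E1 s r sp x) \<longleftrightarrow> i \<ge> 1 \<and> y \<in> Xi E1 s r sp x i"
  "FE i \<in> LE (Fx E1 s r sp x) \<longleftrightarrow> i \<ge> 1"
  "FY i y \<in> LE (Fx E1 s r sp x) \<longleftrightarrow> i \<ge> 1 \<and> y \<in> Xi E1 s r sp x i"
  "Ls (Fx E1 s r sp x) (FE i) = W (Suc i)"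
  "Ls (Fx E1 s r sp x) (FY i y) = (if length y = 1 then W i else WY i (butlast y))"
  "Lr (Fx E1 s r sp x) (FE i) = W i"
  "Lr (Fx E1 s r sp x) (FY i y) = WY i y"
  "phiV (Fx E1 s r sp x) (W i) = rd s r (x (i - 1))"
  "phiV (Fx E1 s r sp x) (WY i y) = rd s r (last y)"
  "phiE (Fx E1 s r sp x) (FE i) = x (i - 1)"
  "phiE (Fx E1 s r sp x) (FY i y) = last y"
  by (auto simp: Fx_def)

lemma in_edge_Fx_simps [simp]:
  "in_edge w \<in> LE (Fx E1 s r sp x) \<longleftrightarrow> w \<in> LV (Fx E1 s r sp x)"
  "Lr (Fx E1 s r sp x) (in_edge w) = w"
  "Ls (Fx E1 s r sp x) (in_edge w) = parent w"
  "phiE (Fx E1 s r sp x) (in_edge w) = label x w"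
  "in_edge (Lr (Fx E1 s r sp x) f) = f"
  by (cases w; simp; fail)+ (cases f; simp)

lemma phiV_Fx: "phiV (Fx E1 s r sp x) w = rd s r (label x w)"
  by (cases w) simp_all

lemma parent_in_Fx: "w \<in> LV (Fx E1 s r sp x) \<Longrightarrow> parent w \<in> LV (Fx E1 s r sp x)"
  by (cases w) (auto simp: butlast_in_Xi)

lemma Fx_endpoints:
  assumes "f \<in> LE (Fx E1 s r sp x)"
  shows "Ls (Fx E1 s r sp x) f \<in> LV (Fx E1 s r sp x) \<and> Lr (Fx E1 s r sp x) f \<in> LV (Fx E1 s r sp x)"
  using assms by (cases f) (auto simp: butlast_in_Xi)

lemma bij_betw_in_edge_Fx: "bij_betw in_edge (LV (Fx E1 s r sp x)) (LE (Fx E1 s r sp x))"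
  by (rule bij_betw_byWitness[where f' = "Lr (Fx E1 s r sp x)"]) (auto dest: Fx_endpoints)

lemma bij_betw_Lr_Fx: "bij_betw (Lr (Fx E1 s r sp x)) (LE (Fx E1 s r sp x)) (LV (Fx E1 s r sp x))"
  by (rule bij_betw_byWitness[where f' = in_edge]) (auto dest: Fx_endpoints)

lemma lgraph_iso_FxE:
  assumes "lgraph_iso (Fx E1 s r sp x) (Fx E1 s r sp z)"
  obtains a where "bij_betw a (LV (Fx E1 s r sp x)) (LV (Fx E1 s r sp z))"
    and "\<forall>w\<in>LV (Fx E1 s r sp x). a (parent w) = parent (a w) \<and> label z (a w) = label x w"
proof -
  let ?F = "Fx E1 s r sp x" and ?G = "Fx E1 s r sp z"
  obtain a b where a: "bij_betw a (LV ?F) (LV ?G)"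
    and ab: "\<forall>f\<in>LE ?F. Ls ?G (b f) = a (Ls ?F f) \<and> Lr ?G (b f) = a (Lr ?F f) \<and> phiE ?G (b f) = phiE ?F f"
    using assms unfolding lgraph_iso_def by blast
  have "a (parent w) = parent (a w) \<and> label z (a w) = label x w" if "w \<in> LV ?F" for w
  proof -
    have edge: "Ls ?G (b (in_edge w)) = a (parent w) \<and> Lr ?G (b (in_edge w)) = a w \<and>
        phiE ?G (b (in_edge w)) = label x w"
      using ab that by simp
    then have "b (in_edge w) = in_edge (a w)"
      using in_edge_Fx_simps(5) by metis
    then show ?thesis
      using edge by simp
  qed
  with a that show ?thesis by blast
qed

lemma lgraph_iso_FxI:
  assumes a: "bij_betw a (LV (Fx E1 s r sp x)) (LV (Fx E1 s r sp z))"
    and compat: "\<forall>w\<in>LV (Fx E1 s r sp x). a (parent w) = parent (a w) \<and> label z (a w) = label x w"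
  shows "lgraph_iso (Fx E1 s r sp x) (Fx E1 s r sp z)"
proof -
  let ?F = "Fx E1 s r sp x" and ?G = "Fx E1 s r sp z"
  define b where "b = in_edge \<circ> a \<circ> Lr ?F"
  have "bij_betw b (LE ?F) (LE ?G)"
    unfolding b_def using bij_betw_Lr_Fx a bij_betw_in_edge_Fx by (blast intro: bij_betw_trans)
  moreover have "Ls ?G (b f) = a (Ls ?F f) \<and> Lr ?G (b f) = a (Lr ?F f) \<and> phiE ?G (b f) = phiE ?F f"
    if "f \<in> LE ?F" for f
  proof -
    have "Lr ?F f \<in> LV ?F" "f = in_edge (Lr ?F f)"
      using Fx_endpoints[OF that] by simp_all
    then show ?thesis
      using compat unfolding b_def by (metis comp_apply in_edge_Fx_simps(2-4))
  qed
  moreover have "\<forall>w\<in>LV ?F. phiV ?G (a w) = phiV ?F w"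
    using compat by (simp add: phiV_Fx)
  ultimately show ?thesis
    using a unfolding lgraph_iso_def by blast
qed

section \<open>Isomorphic graphs come from tail-equivalent words\<close>

lemma funpow_parent_W: "(parent ^^ n) (W i) = W (i + n)"
  by (induction n) auto

lemma funpow_parent_WY: "y \<noteq> [] \<Longrightarrow> (parent ^^ length y) (WY j y) = W j"
proof (induction y rule: rev_induct)
  case (snoc t u)
  then show ?case
    by (cases "u = []") (simp_all add: funpow_Suc_right del: funpow.simps)
qed simp

lemma Fx_reaches_spine:
  assumes "v \<in> LV (Fx E1 s r sp x)"
  obtains n j where "(parent ^^ n) v = W j"
proof (cases v)
  case (W j)
  then show ?thesis using that[of 0] by simp
next
  case (WY j y)
  then have "y \<noteq> []"
    using assms by (auto dest: Xi_nonempty)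
  then show ?thesis
    using that[of "length y" j] funpow_parent_WY[OF \<open>y \<noteq> []\<close>, of j] WY by simp
qed

lemma tail_equiv_if_lgraph_iso_Fx:
  assumes "lgraph_iso (Fx E1 s r sp x) (Fx E1 s r sp z)"
  shows "tail_equiv x z"
proof -
  let ?F = "Fx E1 s r sp x" and ?G = "Fx E1 s r sp z"
  obtain a where a: "bij_betw a (LV ?F) (LV ?G)"
    and compat: "\<forall>w\<in>LV ?F. a (parent w) = parent (a w) \<and> label z (a w) = label x w"
    using assms by (rule lgraph_iso_FxE)
  have a_funpow: "a ((parent ^^ n) w) = (parent ^^ n) (a w)" if "w \<in> LV ?F" for n w
    using that
  proof (induction n arbitrary: w)
    case (Suc n)
    then have "a ((parent ^^ n) (parent w)) = (parent ^^ n) (a (parent w))"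
      using parent_in_Fx by blast
    then show ?case
      using compat Suc.prems by (simp add: funpow_Suc_right del: funpow.simps)
  qed simp
  have "a (W 1) \<in> LV ?G"
    using bij_betw_apply[OF a, of "W 1"] by simp
  then obtain n j where "(parent ^^ n) (a (W 1)) = W j"
    by (rule Fx_reaches_spine)
  then have "a (W (Suc n)) = W j"
    using a_funpow[of "W 1" n] by (simp add: funpow_parent_W)
  then have spine: "a (W (Suc n + k)) = W (j + k)" for k
    using a_funpow[of "W (Suc n)" k] by (simp add: funpow_parent_W)
  have "x (Suc n + k) = z (j + k)" for k
    using compat[rule_format, of "W (Suc n + Suc k)"] spine[of "Suc k"] by simp
  then show ?thesis
    unfolding tail_equiv_def by blast
qed

section \<open>Shifting the word\<close>

lemma Xi_shift_Suc:
  assumes "j \<ge> 2"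
  shows "Xi E1 s r sp (\<lambda>k. x (Suc k)) j = Xi E1 s r sp x (Suc j)"
  using assms by (auto simp: Xi_def Suc_diff_Suc numeral_2_eq_2)

lemma basis_path_Cons_x0_iff:
  assumes "x \<in> Xinf E1 s r sp" "t \<noteq> []"
  shows "basis_path E1 s r sp (x 0 # t) \<longleftrightarrow> t \<in> Xi E1 s r sp x 1"
  using basis_path_append_iff[of "[x 0]" t E1 s r sp] XinfD[OF assms(1), of 1] assms(2)
  by (simp add: Xi_def)

lemma Xi_shift_1:
  assumes "x \<in> Xinf E1 s r sp"
  shows "Xi E1 s r sp (\<lambda>k. x (Suc k)) 1 =
    insert [x 0] ((#) (x 0) ` Xi E1 s r sp x 1 \<union> Xi E1 s r sp x 2)"
proof (intro equalityI subsetI)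
  fix y
  assume y: "y \<in> Xi E1 s r sp (\<lambda>k. x (Suc k)) 1"
  show "y \<in> insert [x 0] ((#) (x 0) ` Xi E1 s r sp x 1 \<union> Xi E1 s r sp x 2)"
  proof (cases "hd y = x 0")
    case True
    then obtain t where t: "y = x 0 # t"
      using Xi_nonempty[OF y] by (metis list.collapse)
    moreover have "t \<in> Xi E1 s r sp x 1" if "t \<noteq> []"
      using y t basis_path_Cons_x0_iff[OF assms that] by (simp add: Xi_def)
    ultimately show ?thesis
      by blast
  next
    case False
    then show ?thesis
      using y by (simp add: Xi_def)
  qed
next
  fix y
  have x0: "basis_path E1 s r sp [x 0]" and x10: "basis_path E1 s r sp [x 1, x 0]"
    using XinfD[OF assms, of 1] XinfD[OF assms, of 2] by (simp_all add: numeral_2_eq_2)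
  assume "y \<in> insert [x 0] ((#) (x 0) ` Xi E1 s r sp x 1 \<union> Xi E1 s r sp x 2)"
  then consider "y = [x 0]" | t where "t \<in> Xi E1 s r sp x 1" "y = x 0 # t" | "y \<in> Xi E1 s r sp x 2"
    by blast
  then show "y \<in> Xi E1 s r sp (\<lambda>k. x (Suc k)) 1"
  proof cases
    case (2 t)
    then have "basis_path E1 s r sp y"
      using basis_path_Cons_x0_iff[OF assms Xi_nonempty[OF 2(1)]] by simp
    then show ?thesis
      using 2 x10 by (simp add: Xi_def)
  qed (use x0 x10 in \<open>simp_all add: Xi_def\<close>)
qed

fun shift_vertex :: "(nat \<Rightarrow> 'e dedge) \<Rightarrow> 'e fvert \<Rightarrow> 'e fvert" where
  "shift_vertex x (W i) = (if i = 1 then WY 1 [x 0] else W (i - 1))"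
| "shift_vertex x (WY i y) = (if i = 1 then WY 1 (x 0 # y) else WY (i - 1) y)"

fun unshift_vertex :: "(nat \<Rightarrow> 'e dedge) \<Rightarrow> 'e fvert \<Rightarrow> 'e fvert" where
  "unshift_vertex x (W j) = W (Suc j)"
| "unshift_vertex x (WY j y) =
    (if j = 1 \<and> hd y = x 0 then (if tl y = [] then W 1 else WY 1 (tl y)) else WY (Suc j) y)"

lemma shift_vertex_in_Fx:
  assumes "x \<in> Xinf E1 s r sp" "w \<in> LV (Fx E1 s r sp x)"
  shows "shift_vertex x w \<in> LV (Fx E1 s r sp (\<lambda>k. x (Suc k)))"
proof (cases w)
  case (W i)
  then show ?thesis
    using assms Xi_shift_1[OF assms(1)] by auto
next
  case (WY i y)
  then consider "i = 1" | "i = 2" | "i \<ge> 3"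
    using assms(2) by fastforce
  then show ?thesis
    using assms WY Xi_shift_1[OF assms(1)] by cases (auto simp: Xi_shift_Suc)
qed

lemma unshift_vertex_in_Fx:
  assumes "x \<in> Xinf E1 s r sp" "w \<in> LV (Fx E1 s r sp (\<lambda>k. x (Suc k)))"
  shows "unshift_vertex x w \<in> LV (Fx E1 s r sp x)"
proof (cases w)
  case (W j)
  then show ?thesis
    using assms by simp
next
  case (WY j y)
  then consider "j = 1" | "j \<ge> 2"
    using assms(2) by fastforce
  then show ?thesis
  proof cases
    case 1
    then have "y \<in> insert [x 0] ((#) (x 0) ` Xi E1 s r sp x 1 \<union> Xi E1 s r sp x 2)"
      using assms(2) WY Xi_shift_1[OF assms(1)] by simp
    then show ?thesis
      using WY 1 by (auto simp: Xi_def dest: Xi_nonempty)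
  next
    case 2
    then show ?thesis
      using assms WY by (auto simp: Xi_shift_Suc)
  qed
qed

lemma unshift_shift_vertex:
  assumes "w \<in> LV (Fx E1 s r sp x)"
  shows "unshift_vertex x (shift_vertex x w) = w"
proof (cases w)
  case (W i)
  then show ?thesis
    using assms by auto
next
  case (WY i y)
  then have "y \<in> Xi E1 s r sp x i" "i \<ge> 1"
    using assms by simp_all
  then have "y \<noteq> []" "i = 2 \<Longrightarrow> hd y \<noteq> x 0"
    by (simp_all add: Xi_nonempty) (simp add: Xi_def)
  then show ?thesis
    using WY \<open>i \<ge> 1\<close> by (cases "i = 2") auto
qed

lemma shift_unshift_vertex:
  assumes "w \<in> LV (Fx E1 s r sp (\<lambda>k. x (Suc k)))"
  shows "shift_vertex x (unshift_vertex x w) = w"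
proof (cases w)
  case (W j)
  then show ?thesis
    using assms by auto
next
  case (WY j y)
  then have "y \<noteq> []" "j \<ge> 1"
    using assms by (auto dest: Xi_nonempty)
  then show ?thesis
    using WY by (cases y) auto
qed

lemma bij_betw_shift_vertex:
  assumes "x \<in> Xinf E1 s r sp"
  shows "bij_betw (shift_vertex x) (LV (Fx E1 s r sp x)) (LV (Fx E1 s r sp (\<lambda>k. x (Suc k))))"
  by (rule bij_betw_byWitness[where f' = "unshift_vertex x"])
    (use assms unshift_shift_vertex shift_unshift_vertex shift_vertex_in_Fx unshift_vertex_in_Fx in auto)

lemma shift_vertex_parent_label:
  assumes "w \<in> LV (Fx E1 s r sp x)"
  shows "shift_vertex x (parent w) = parent (shift_vertex x w) \<and>
    label (\<lambda>k. x (Suc k)) (shift_vertex x w) = label x w"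
proof (cases w)
  case (W i)
  then show ?thesis
    using assms by (auto simp: Suc_diff_Suc)
next
  case (WY i y)
  then have "y \<noteq> []"
    using assms by (auto dest: Xi_nonempty)
  then show ?thesis
    using WY by (auto simp: length_Suc_conv)
qed

lemma lgraph_iso_Fx_shift:
  assumes "x \<in> Xinf E1 s r sp"
  shows "lgraph_iso (Fx E1 s r sp x) (Fx E1 s r sp (\<lambda>k. x (Suc k)))"
  using bij_betw_shift_vertex[OF assms] shift_vertex_parent_label by (blast intro: lgraph_iso_FxI)

lemma lgraph_iso_Fx_shift_n:
  assumes "x \<in> Xinf E1 s r sp"
  shows "lgraph_iso (Fx E1 s r sp x) (Fx E1 s r sp (\<lambda>k. x (m + k)))"
proof (induction m)
  case 0
  show ?case by (simp add: lgraph_iso_refl)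
next
  case (Suc m)
  have "lgraph_iso (Fx E1 s r sp (\<lambda>k. x (m + k))) (Fx E1 s r sp (\<lambda>k. x (Suc m + k)))"
    using lgraph_iso_Fx_shift[OF Xinf_shift[OF assms, of m]] by simp
  with Suc.IH show ?case
    by (rule lgraph_iso_trans)
qed

lemma lgraph_iso_Fx_if_tail_equiv:
  assumes "x \<in> Xinf E1 s r sp" "z \<in> Xinf E1 s r sp" "tail_equiv x z"
  shows "lgraph_iso (Fx E1 s r sp x) (Fx E1 s r sp z)"
proof -
  obtain m n where "(\<lambda>k. x (m + k)) = (\<lambda>k. z (n + k))"
    using assms(3) unfolding tail_equiv_def by blast
  then have "lgraph_iso (Fx E1 s r sp x) (Fx E1 s r sp (\<lambda>k. z (n + k)))"
    using lgraph_iso_Fx_shift_n[OF assms(1), of m] by simp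
  moreover have "lgraph_iso (Fx E1 s r sp (\<lambda>k. z (n + k))) (Fx E1 s r sp z)"
    using lgraph_iso_sym[OF lgraph_iso_Fx_shift_n[OF assms(2)] Fx_endpoints] .
  ultimately show ?thesis
    by (rule lgraph_iso_trans)
qed

theorem proposition5p9:
  fixes E0 :: "'v set" and E1 :: "'e set" and s r :: "'e \<Rightarrow> 'v" and sp :: "'v \<Rightarrow> 'e"
    and x z :: "nat \<Rightarrow> 'e dedge"
  assumes "graph_wf E0 E1 s r"
    and "row_finite E0 E1 s"
    and "special_choice E0 E1 s sp"
    and "x \<in> Xinf E1 s r sp"
    and "z \<in> Xinf E1 s r sp"
  shows "lgraph_iso (Fx E1 s r sp x) (Fx E1 s r sp z) \<longleftrightarrow> tail_equiv x z"
  using tail_equiv_if_lgraph_iso_Fx lgraph_iso_Fx_if_tail_equiv assms(4,5) by blast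

end
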